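(* Let $g:\{0,1\}^N\to\{0,1\}$ be a total Boolean function. If $g$ can be computed by an $R$-round randomized AMPC algorithm with I/O capacity $S$ and error at most $1/3$, then the approximate degree of $g$ is at most $S^{2R}$.
   Context: AMPC model with I/O capacity $S$: computation proceeds in rounds communicating through distributed data stores (DDS) $\mathcal{D}_0,\dots,\mathcal{D}_R$, each storing under each key a multiset of values (possibly empty; duplicates allowed, each value written by a unique machine). On input $x\in\{0,1\}^N$, $\mathcal{D}_0$ consists of the pairs $(i,x_i)$, $i=1,\dots,N$. In round $r\ge1$ each machine (arbitrarily many, computationally unbounded, deterministic) adaptively queries keys of $\mathcal{D}_{r-1}$, receiving the whole multiset under the key, with later queries depending arbitrarily on earlier queries and responses; the total number of values in all responses plus the number of empty-response queries is at most $S$; it then writes at most $S$ key-value pairs to $\mathcal{D}_r$ as an arbitrary function of its queries and responses. In every round, on every input, at most $S$ values are written under any single key (a machine exceeding its budget stops querying and writes nothing). A deterministic algorithm computes $g$ in $R$ rounds if for every valid input $x$, $\mathcal{D}_R$ contains exactly the single pair $(\textsc{answer},g(x))$. A randomized AMPC algorithm is a probability distribution over deterministic AMPC algorithms; its number of rounds is the maximum over the support; it computes $g$ with error at most $\delta$ if for each valid input $x$ it outputs $g(x)$ (i.e. $\mathcal{D}_R$ is exactly $\{(\textsc{answer},g(x))\}$) with probability at least $1-\delta$. A polynomial $p$ approximately represents $g$ if $|p(x)-g(x)|\le 1/3$ for all $x\in\{0,1\}^N$; the approximate degree $\widetilde{\deg}(g)$ is the minimum degree of such a $p$. *)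

theory Defs
  imports "HOL-Probability.Probability"
begin

text \<open>Keys of a distributed data store: input keys, the distinguished ANSWER key,
  and arbitrary auxiliary keys (any countable key space can be encoded).\<close>

datatype key = Inp nat | Answer | Aux "nat list"

type_synonym dds = "key \<Rightarrow> nat multiset"

type_synonym hist = "(key \<times> nat multiset) list"

text \<open>A deterministic machine: an adaptive query strategy (Some k = query key k next,
  None = stop querying) and a write function applied to the final history.\<close>
type_synonym machine = "(hist \<Rightarrow> key option) \<times> (hist \<Rightarrow> (key \<times> nat) list)"

definition qcost :: "nat multiset \<Rightarrow> nat" where
  "qcost M = (if M = {#} then 1 else size M)"

text \<open>The fuel argument is only for termination; since every
  query costs at least 1, fuel S+1 never runs out when the budget is S.\<close>
fun exec :: "nat \<Rightarrow> machine \<Rightarrow> dds \<Rightarrow> nat \<Rightarrow> hist \<Rightarrow> hist option" where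
  "exec 0 m D b h = None"
| "exec (Suc n) m D b h =
     (case fst m h of
        None \<Rightarrow> Some h
      | Some k \<Rightarrow> (if qcost (D k) > b then None
                   else exec n m D (b - qcost (D k)) (h @ [(k, D k)])))"

definition writes :: "nat \<Rightarrow> machine \<Rightarrow> dds \<Rightarrow> (key \<times> nat) list" where
  "writes S m D = (case exec (Suc S) m D S [] of None \<Rightarrow> [] | Some h \<Rightarrow> snd m h)"

definition round_step :: "nat \<Rightarrow> machine list \<Rightarrow> dds \<Rightarrow> dds" where
  "round_step S ms D = (\<lambda>k. sum_list (map (\<lambda>m. mset (map snd (filter (\<lambda>p. fst p = k) (writes S m D)))) ms))"

type_synonym algorithm = "machine list list"

text \<open>Initial store D_0 for input x (x_i = xs ! (i-1), i = 1..N).\<close>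
definition dds0 :: "bool list \<Rightarrow> dds" where
  "dds0 xs = (\<lambda>k. case k of Inp i \<Rightarrow> (if 1 \<le> i \<and> i \<le> length xs then {# of_bool (xs ! (i - 1)) #} else {#})
                          | _ \<Rightarrow> {#})"

primrec dds_at :: "nat \<Rightarrow> algorithm \<Rightarrow> bool list \<Rightarrow> nat \<Rightarrow> dds" where
  "dds_at S A xs 0 = dds0 xs"
| "dds_at S A xs (Suc r) = round_step S (A ! r) (dds_at S A xs r)"

definition valid_alg :: "nat \<Rightarrow> nat \<Rightarrow> algorithm \<Rightarrow> bool" where
  "valid_alg N S A \<longleftrightarrow>
     (\<forall>xs. length xs = N \<longrightarrow> (\<forall>r < length A.
        (\<forall>m \<in> set (A ! r). length (writes S m (dds_at S A xs r)) \<le> S) \<and>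
        (\<forall>k. size (dds_at S A xs (Suc r) k) \<le> S)))"

definition outputs :: "nat \<Rightarrow> algorithm \<Rightarrow> bool list \<Rightarrow> bool \<Rightarrow> bool" where
  "outputs S A xs b \<longleftrightarrow>
     dds_at S A xs (length A) = (\<lambda>k. if k = Answer then {# of_bool b #} else {#})"

definition rand_computes :: "nat \<Rightarrow> nat \<Rightarrow> nat \<Rightarrow> real \<Rightarrow> algorithm pmf \<Rightarrow> (bool list \<Rightarrow> bool) \<Rightarrow> bool" where
  "rand_computes N S R \<delta> P g \<longleftrightarrow>
     (\<forall>A \<in> set_pmf P. valid_alg N S A \<and> length A \<le> R) \<and>
     (\<forall>xs. length xs = N \<longrightarrow> measure_pmf.prob P {A. outputs S A xs (g xs)} \<ge> 1 - \<delta>)"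

definition poly_deg_le :: "nat \<Rightarrow> nat \<Rightarrow> ((nat \<Rightarrow> real) \<Rightarrow> real) \<Rightarrow> bool" where
  "poly_deg_le N d p \<longleftrightarrow>
     (\<exists>(Mon :: (nat \<Rightarrow> nat) set) c. finite Mon \<and>
        (\<forall>\<alpha> \<in> Mon. (\<Sum>i = 1..N. \<alpha> i) \<le> d) \<and>
        (\<forall>x. p x = (\<Sum>\<alpha> \<in> Mon. c \<alpha> * (\<Prod>i = 1..N. x i ^ \<alpha> i))))"

definition bitvec :: "bool list \<Rightarrow> nat \<Rightarrow> real" where
  "bitvec xs = (\<lambda>i. of_bool (xs ! (i - 1)))"

definition approx_deg :: "nat \<Rightarrow> (bool list \<Rightarrow> bool) \<Rightarrow> nat" where
  "approx_deg N g = (LEAST d. \<exists>p. poly_deg_le N d p \<and>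
       (\<forall>xs. length xs = N \<longrightarrow> \<bar>p (bitvec xs) - of_bool (g xs)\<bar> \<le> 1/3))"

end

theory Submission
  imports Defs
begin

(* Regard every entry D_r(k) of a data store as a function of the input bits, and call such a
   function of degree at most d if the indicator of each of its fibres is a polynomial of degree
   at most d on the cube.  An adaptive machine with budget S reads at most S entries, so its
   writes form a decision tree of depth S over entries of degree d, hence have degree S * d.  An
   entry of the next store is the sum of the contributions of all machines; as at most S values
   land under a key, only at most S of the events "machine j contributes the multiset V" can hold
   at once, and inclusion-exclusion truncated at S factors shows that the entry has degree
   S * (S * d).  So ANSWER has degree S^(2R) for every deterministic algorithm, and averaging the
   indicator "ANSWER = {1}" over the random algorithm gives a polynomial of that degree whose
   values are within 1/3 of g. *)

lemma poly_deg_le_indexed_sum: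
  fixes \<alpha> :: "'i \<Rightarrow> nat \<Rightarrow> nat"
  assumes "finite I" and "\<And>i. i \<in> I \<Longrightarrow> (\<Sum>j = 1..N. \<alpha> i j) \<le> d"
  shows "poly_deg_le N d (\<lambda>x. \<Sum>i\<in>I. c i * (\<Prod>j = 1..N. x j ^ \<alpha> i j))"
  unfolding poly_deg_le_def
proof (intro exI conjI allI)
  show "finite (\<alpha> ` I)" using assms(1) by simp
  show "\<forall>\<beta>\<in>\<alpha> ` I. (\<Sum>j = 1..N. \<beta> j) \<le> d" using assms(2) by auto
  fix x :: "nat \<Rightarrow> real"
  have "(\<Sum>i\<in>I. c i * (\<Prod>j = 1..N. x j ^ \<alpha> i j))
      = (\<Sum>\<beta>\<in>\<alpha> ` I. \<Sum>i\<in>{i \<in> I. \<alpha> i = \<beta>}. c i * (\<Prod>j = 1..N. x j ^ \<alpha> i j))"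
    by (rule sum.image_gen[OF assms(1)])
  also have "\<dots> = (\<Sum>\<beta>\<in>\<alpha> ` I. (\<Sum>i\<in>{i \<in> I. \<alpha> i = \<beta>}. c i) * (\<Prod>j = 1..N. x j ^ \<beta> j))"
    by (intro sum.cong refl) (auto simp: sum_distrib_right)
  finally show "(\<Sum>i\<in>I. c i * (\<Prod>j = 1..N. x j ^ \<alpha> i j))
      = (\<Sum>\<beta>\<in>\<alpha> ` I. (\<lambda>\<beta>. \<Sum>i\<in>{i \<in> I. \<alpha> i = \<beta>}. c i) \<beta> * (\<Prod>j = 1..N. x j ^ \<beta> j))"
    by simp
qed

lemma poly_deg_le_mono: "poly_deg_le N d p \<Longrightarrow> d \<le> d' \<Longrightarrow> poly_deg_le N d' p"
  unfolding poly_deg_le_def by (meson order_trans)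

lemma poly_deg_le_const: "poly_deg_le N 0 (\<lambda>_. c)"
  using poly_deg_le_indexed_sum[where I="{()}" and \<alpha>="\<lambda>_ _. 0" and c="\<lambda>_. c"] by simp

lemma poly_deg_le_var:
  assumes "1 \<le> i" and "i \<le> N"
  shows "poly_deg_le N 1 (\<lambda>x. x i)"
proof -
  define \<alpha> where "\<alpha> j = (if j = i then 1 else 0 :: nat)" for j
  have "(\<Prod>j = 1..N. x j ^ \<alpha> j) = x i" for x :: "nat \<Rightarrow> real"
    using assms by (simp add: \<alpha>_def if_distrib cong: if_cong)
  moreover have "poly_deg_le N 1 (\<lambda>x. \<Sum>_\<in>{()}. 1 * (\<Prod>j = 1..N. x j ^ \<alpha> j))"
    using assms by (intro poly_deg_le_indexed_sum) (simp_all add: \<alpha>_def)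
  ultimately show ?thesis by simp
qed

lemma poly_deg_le_add:
  assumes "poly_deg_le N d p" and "poly_deg_le N d q"
  shows "poly_deg_le N d (\<lambda>x. p x + q x)"
proof -
  obtain M1 c1 where M1: "finite M1" "\<forall>\<alpha>\<in>M1. (\<Sum>i = 1..N. \<alpha> i) \<le> d"
    and p: "\<And>x. p x = (\<Sum>\<alpha>\<in>M1. c1 \<alpha> * (\<Prod>i = 1..N. x i ^ \<alpha> i))"
    using assms(1) unfolding poly_deg_le_def by blast
  obtain M2 c2 where M2: "finite M2" "\<forall>\<alpha>\<in>M2. (\<Sum>i = 1..N. \<alpha> i) \<le> d"
    and q: "\<And>x. q x = (\<Sum>\<alpha>\<in>M2. c2 \<alpha> * (\<Prod>i = 1..N. x i ^ \<alpha> i))"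
    using assms(2) unfolding poly_deg_le_def by blast
  have "poly_deg_le N d (\<lambda>x. \<Sum>\<alpha>\<in>M1 <+> M2. case_sum c1 c2 \<alpha> * (\<Prod>j = 1..N. x j ^ case_sum id id \<alpha> j))"
    using M1 M2 by (intro poly_deg_le_indexed_sum) auto
  then show ?thesis by (simp add: p q sum.Plus M1(1) M2(1) comp_def)
qed

lemma poly_deg_le_mult:
  assumes "poly_deg_le N d1 p" and "poly_deg_le N d2 q"
  shows "poly_deg_le N (d1 + d2) (\<lambda>x. p x * q x)"
proof -
  obtain M1 c1 where M1: "finite M1" "\<forall>\<alpha>\<in>M1. (\<Sum>i = 1..N. \<alpha> i) \<le> d1"
    and p: "\<And>x. p x = (\<Sum>\<alpha>\<in>M1. c1 \<alpha> * (\<Prod>i = 1..N. x i ^ \<alpha> i))"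
    using assms(1) unfolding poly_deg_le_def by blast
  obtain M2 c2 where M2: "finite M2" "\<forall>\<alpha>\<in>M2. (\<Sum>i = 1..N. \<alpha> i) \<le> d2"
    and q: "\<And>x. q x = (\<Sum>\<alpha>\<in>M2. c2 \<alpha> * (\<Prod>i = 1..N. x i ^ \<alpha> i))"
    using assms(2) unfolding poly_deg_le_def by blast
  have "p x * q x = (\<Sum>i\<in>M1 \<times> M2. c1 (fst i) * c2 (snd i) * (\<Prod>j = 1..N. x j ^ (fst i j + snd i j)))"
    for x by (simp add: p q sum_product sum.cartesian_product case_prod_beta power_add prod.distrib mult_ac)
  moreover have "poly_deg_le N (d1 + d2)
      (\<lambda>x. \<Sum>i\<in>M1 \<times> M2. c1 (fst i) * c2 (snd i) * (\<Prod>j = 1..N. x j ^ (fst i j + snd i j)))"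
    by (rule poly_deg_le_indexed_sum) (use M1 M2 in \<open>auto simp: sum.distrib intro: add_mono\<close>)
  ultimately show ?thesis by simp
qed

definition cube_rep :: "nat \<Rightarrow> nat \<Rightarrow> (bool list \<Rightarrow> real) \<Rightarrow> bool" where
  "cube_rep N d f \<longleftrightarrow> (\<exists>p. poly_deg_le N d p \<and> (\<forall>xs. length xs = N \<longrightarrow> p (bitvec xs) = f xs))"

lemma cube_rep_mono: "cube_rep N d f \<Longrightarrow> d \<le> d' \<Longrightarrow> cube_rep N d' f"
  unfolding cube_rep_def using poly_deg_le_mono by blast

lemma cube_rep_cong:
  assumes "cube_rep N d f" and "\<And>xs. length xs = N \<Longrightarrow> f xs = g xs"
  shows "cube_rep N d g"
  using assms unfolding cube_rep_def by auto

lemma cube_rep_const: "cube_rep N d (\<lambda>_. c)"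
  unfolding cube_rep_def using poly_deg_le_mono[OF poly_deg_le_const] by blast

lemma cube_rep_bit:
  assumes "1 \<le> i" and "i \<le> N"
  shows "cube_rep N 1 (\<lambda>xs. of_bool (xs ! (i - 1)))"
  unfolding cube_rep_def using poly_deg_le_var[OF assms] by (auto simp: bitvec_def)

lemma cube_rep_add:
  assumes "cube_rep N d f" and "cube_rep N d g"
  shows "cube_rep N d (\<lambda>xs. f xs + g xs)"
proof -
  obtain p q where "poly_deg_le N d p" "poly_deg_le N d q"
    and "\<forall>xs. length xs = N \<longrightarrow> p (bitvec xs) = f xs" "\<forall>xs. length xs = N \<longrightarrow> q (bitvec xs) = g xs"
    using assms unfolding cube_rep_def by blast
  then show ?thesis
    unfolding cube_rep_def by (intro exI[of _ "\<lambda>x. p x + q x"]) (simp add: poly_deg_le_add)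
qed

lemma cube_rep_mult:
  assumes "cube_rep N d1 f" and "cube_rep N d2 g"
  shows "cube_rep N (d1 + d2) (\<lambda>xs. f xs * g xs)"
proof -
  obtain p q where "poly_deg_le N d1 p" "poly_deg_le N d2 q"
    and "\<forall>xs. length xs = N \<longrightarrow> p (bitvec xs) = f xs" "\<forall>xs. length xs = N \<longrightarrow> q (bitvec xs) = g xs"
    using assms unfolding cube_rep_def by blast
  then show ?thesis
    unfolding cube_rep_def by (intro exI[of _ "\<lambda>x. p x * q x"]) (simp add: poly_deg_le_mult)
qed

lemma cube_rep_scale: "cube_rep N d f \<Longrightarrow> cube_rep N d (\<lambda>xs. c * f xs)"
  using cube_rep_mult[OF cube_rep_const[of N 0 c]] by simp

lemma cube_rep_sum:
  assumes "finite A" and "\<And>a. a \<in> A \<Longrightarrow> cube_rep N d (f a)"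
  shows "cube_rep N d (\<lambda>xs. \<Sum>a\<in>A. f a xs)"
  using assms
proof (induction A rule: finite_induct)
  case empty
  show ?case by (simp add: cube_rep_const)
next
  case (insert a A)
  then show ?case by (simp add: cube_rep_add)
qed

lemma cube_rep_prod:
  assumes "finite A" and "\<And>a. a \<in> A \<Longrightarrow> cube_rep N e (f a)"
  shows "cube_rep N (card A * e) (\<lambda>xs. \<Prod>a\<in>A. f a xs)"
  using assms
proof (induction A rule: finite_induct)
  case empty
  show ?case by (simp add: cube_rep_const)
next
  case (insert a A)
  then show ?case by (simp add: cube_rep_mult)
qed

definition fibre_rep :: "nat \<Rightarrow> nat \<Rightarrow> (bool list \<Rightarrow> 'a) \<Rightarrow> bool" where
  "fibre_rep N d \<phi> \<longleftrightarrow> (\<forall>v. cube_rep N d (\<lambda>xs. of_bool (\<phi> xs = v)))"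

lemma fibre_rep_mono: "fibre_rep N d \<phi> \<Longrightarrow> d \<le> d' \<Longrightarrow> fibre_rep N d' \<phi>"
  unfolding fibre_rep_def using cube_rep_mono by blast

lemma fibre_rep_cong:
  "fibre_rep N d \<phi> \<Longrightarrow> (\<And>xs. length xs = N \<Longrightarrow> \<phi> xs = \<psi> xs) \<Longrightarrow> fibre_rep N d \<psi>"
  unfolding fibre_rep_def by (metis (mono_tags, lifting) cube_rep_cong)

lemma fibre_rep_const: "fibre_rep N d (\<lambda>_. c)"
  unfolding fibre_rep_def using cube_rep_const by blast

lemma fibre_rep_bind:
  assumes "fibre_rep N d1 \<alpha>" and "\<And>v. fibre_rep N d2 (\<Phi> v)"
  shows "fibre_rep N (d1 + d2) (\<lambda>xs. \<Phi> (\<alpha> xs) xs)"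
  unfolding fibre_rep_def
proof
  fix w
  let ?V = "\<alpha> ` {xs. length xs = N}"
  have "cube_rep N (d1 + d2) (\<lambda>xs. \<Sum>v\<in>?V. of_bool (\<alpha> xs = v) * of_bool (\<Phi> v xs = w))"
    using assms unfolding fibre_rep_def by (intro cube_rep_sum cube_rep_mult) (auto simp: finite_list_length)
  moreover have "(\<Sum>v\<in>?V. of_bool (\<alpha> xs = v) * of_bool (\<Phi> v xs = w)) = (of_bool (\<Phi> (\<alpha> xs) xs = w) :: real)"
    if "length xs = N" for xs
  proof -
    have "\<alpha> xs \<in> ?V" using that by simp
    have "(\<Sum>v\<in>?V. of_bool (\<alpha> xs = v) * of_bool (\<Phi> v xs = w))
        = (\<Sum>v\<in>?V. if \<alpha> xs = v then of_bool (\<Phi> v xs = w) else (0 :: real))"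
      by (intro sum.cong) auto
    with \<open>\<alpha> xs \<in> ?V\<close> show ?thesis by (simp add: finite_list_length)
  qed
  ultimately show "cube_rep N (d1 + d2) (\<lambda>xs. of_bool (\<Phi> (\<alpha> xs) xs = w))"
    by (rule cube_rep_cong)
qed

lemma fibre_rep_map: "fibre_rep N d \<alpha> \<Longrightarrow> fibre_rep N d (\<lambda>xs. \<psi> (\<alpha> xs))"
  using fibre_rep_bind[of N d \<alpha> 0 "\<lambda>v _. \<psi> v"] fibre_rep_const by fastforce

lemma fibre_rep_bit:
  assumes "1 \<le> i" and "i \<le> N"
  shows "fibre_rep N 1 (\<lambda>xs. xs ! (i - 1))"
  unfolding fibre_rep_def
proof
  fix v
  have "cube_rep N 1 (\<lambda>xs. (if v then 0 else 1) + (if v then 1 else -1) * of_bool (xs ! (i - 1)))"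
    using assms by (intro cube_rep_add cube_rep_const cube_rep_scale cube_rep_bit)
  then show "cube_rep N 1 (\<lambda>xs. of_bool (xs ! (i - 1) = v))"
    by (rule cube_rep_cong) auto
qed

lemma prod_mult_prod_one_minus_expand:
  fixes y :: "'i \<Rightarrow> 'a :: comm_ring_1"
  assumes "finite I" and "T \<subseteq> I"
  shows "(\<Prod>i\<in>T. y i) * (\<Prod>i\<in>I - T. 1 - y i) = (\<Sum>U\<in>Pow (I - T). (-1) ^ card U * (\<Prod>i\<in>T \<union> U. y i))"
proof -
  have "(\<Prod>i\<in>I - T. 1 - y i) = (\<Prod>i\<in>I - T. - y i + 1)" by simp
  also have "\<dots> = (\<Sum>U\<in>Pow (I - T). (\<Prod>i\<in>U. - y i) * (\<Prod>i\<in>I - T - U. 1))"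
    using assms(1) by (intro prod_add) simp
  finally have "(\<Prod>i\<in>T. y i) * (\<Prod>i\<in>I - T. 1 - y i)
      = (\<Sum>U\<in>Pow (I - T). (-1) ^ card U * ((\<Prod>i\<in>T. y i) * (\<Prod>i\<in>U. y i)))"
    by (simp add: sum_distrib_left prod_uminus mult_ac)
  also have "\<dots> = (\<Sum>U\<in>Pow (I - T). (-1) ^ card U * (\<Prod>i\<in>T \<union> U. y i))"
  proof (intro sum.cong refl)
    fix U assume "U \<in> Pow (I - T)"
    then have "finite T" "finite U" "T \<inter> U = {}"
      using assms by (auto intro: finite_subset)
    then show "(-1) ^ card U * ((\<Prod>i\<in>T. y i) * (\<Prod>i\<in>U. y i)) = (-1) ^ card U * (\<Prod>i\<in>T \<union> U. y i)"
      by (simp add: prod.union_disjoint)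
  qed
  finally show ?thesis .
qed

lemma prod_of_bool:
  "finite A \<Longrightarrow> (\<Prod>i\<in>A. of_bool (P i) :: 'a :: comm_semiring_1) = of_bool (\<forall>i\<in>A. P i)"
  by (induction A rule: finite_induct) auto

(* Inclusion-exclusion; the terms with more than K factors vanish because at most K events hold. *)
lemma of_bool_Collect_eq_truncated_expansion:
  fixes E :: "'i \<Rightarrow> bool"
  assumes "finite I" and "T \<subseteq> I" and "card {i \<in> I. E i} \<le> K"
  shows "(of_bool ({i \<in> I. E i} = T) :: 'a :: comm_ring_1)
    = (\<Sum>U\<in>Pow (I - T). (-1) ^ card U * (if card (T \<union> U) \<le> K then \<Prod>i\<in>T \<union> U. of_bool (E i) else 0))"
proof -
  have "finite T" using assms(2,1) by (rule finite_subset)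
  then have "(of_bool ({i \<in> I. E i} = T) :: 'a)
      = (\<Prod>i\<in>T. of_bool (E i)) * (\<Prod>i\<in>I - T. 1 - of_bool (E i))"
    using assms(1,2) by (auto simp: prod_of_bool of_bool_not_iff[symmetric])
  also have "\<dots> = (\<Sum>U\<in>Pow (I - T). (-1) ^ card U * (\<Prod>i\<in>T \<union> U. of_bool (E i)))"
    using assms(1,2) by (rule prod_mult_prod_one_minus_expand)
  also have "\<dots> = (\<Sum>U\<in>Pow (I - T). (-1) ^ card U *
      (if card (T \<union> U) \<le> K then \<Prod>i\<in>T \<union> U. of_bool (E i) else 0))"
  proof (intro sum.cong refl)
    fix U
    assume "U \<in> Pow (I - T)"
    then have "T \<union> U \<subseteq> I" and "finite (T \<union> U)"
      using assms(1,2) by (auto intro: finite_subset)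
    moreover have "card (T \<union> U) \<le> card {i \<in> I. E i}" if "\<forall>i\<in>T \<union> U. E i"
      using that \<open>T \<union> U \<subseteq> I\<close> assms(1) by (intro card_mono) auto
    ultimately show "(-1) ^ card U * (\<Prod>i\<in>T \<union> U. of_bool (E i) :: 'a)
        = (-1) ^ card U * (if card (T \<union> U) \<le> K then \<Prod>i\<in>T \<union> U. of_bool (E i) else 0)"
      using assms(3) by (auto simp: prod_of_bool)
  qed
  finally show ?thesis .
qed

lemma fibre_rep_true_events:
  assumes "finite I"
    and "\<And>i. i \<in> I \<Longrightarrow> cube_rep N e (\<lambda>xs. of_bool (E i xs))"
    and "\<And>xs. length xs = N \<Longrightarrow> card {i \<in> I. E i xs} \<le> K"
  shows "fibre_rep N (K * e) (\<lambda>xs. {i \<in> I. E i xs})"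
  unfolding fibre_rep_def
proof
  fix T
  show "cube_rep N (K * e) (\<lambda>xs. of_bool ({i \<in> I. E i xs} = T))"
  proof (cases "T \<subseteq> I")
    case False
    show ?thesis
      by (rule cube_rep_cong[OF cube_rep_const[of N "K * e" 0]]) (use False in auto)
  next
    case True
    have "cube_rep N (K * e) (\<lambda>xs. \<Sum>U\<in>Pow (I - T). (-1) ^ card U *
        (if card (T \<union> U) \<le> K then \<Prod>i\<in>T \<union> U. of_bool (E i xs) else 0))"
    proof (intro cube_rep_sum cube_rep_scale)
      fix U
      assume "U \<in> Pow (I - T)"
      then have "T \<union> U \<subseteq> I" and "finite (T \<union> U)"
        using True assms(1) by (auto intro: finite_subset)
      then have "cube_rep N (card (T \<union> U) * e) (\<lambda>xs. \<Prod>i\<in>T \<union> U. of_bool (E i xs))"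
        using assms(2) by (intro cube_rep_prod) auto
      then show "cube_rep N (K * e)
          (\<lambda>xs. if card (T \<union> U) \<le> K then \<Prod>i\<in>T \<union> U. of_bool (E i xs) else 0)"
        by (cases "card (T \<union> U) \<le> K") (simp_all add: cube_rep_mono cube_rep_const)
    qed (use assms(1) in simp)
    then show ?thesis
    proof (rule cube_rep_cong)
      fix xs :: "bool list"
      assume "length xs = N"
      then show "(\<Sum>U\<in>Pow (I - T). (-1) ^ card U *
          (if card (T \<union> U) \<le> K then \<Prod>i\<in>T \<union> U. of_bool (E i xs) else 0))
        = (of_bool ({i \<in> I. E i xs} = T) :: real)"
        by (rule of_bool_Collect_eq_truncated_expansion[OF assms(1) True assms(3), symmetric])
    qed
  qed
qed

lemma card_nonempty_le_size_sum_mset: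
  assumes "finite J"
  shows "card {j \<in> J. M j \<noteq> {#}} \<le> size (\<Sum>j\<in>J. M j)"
proof -
  have "card {j \<in> J. M j \<noteq> {#}} = (\<Sum>j\<in>{j \<in> J. M j \<noteq> {#}}. 1)"
    by simp
  also have "\<dots> \<le> (\<Sum>j\<in>{j \<in> J. M j \<noteq> {#}}. size (M j))"
    by (rule sum_mono) (simp add: Suc_le_eq nonempty_has_size)
  also have "\<dots> \<le> (\<Sum>j\<in>J. size (M j))"
    using assms by (intro sum_mono2) auto
  finally show ?thesis by simp
qed

lemma fibre_rep_sum_mset:
  fixes W :: "'j \<Rightarrow> bool list \<Rightarrow> 'a multiset"
  assumes "finite J"
    and "\<And>j. j \<in> J \<Longrightarrow> fibre_rep N e (W j)"
    and "\<And>xs. length xs = N \<Longrightarrow> size (\<Sum>j\<in>J. W j xs) \<le> K"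
  shows "fibre_rep N (K * e) (\<lambda>xs. \<Sum>j\<in>J. W j xs)"
proof -
  (* The sum is determined by the set of pairs (j, W j xs) with W j xs nonempty, of which there
     are at most K. *)
  define I where "I = J \<times> ((\<Union>j\<in>J. W j ` {xs. length xs = N}) - {{#}})"
  define Y where "Y xs = {i \<in> I. W (fst i) xs = snd i}" for xs
  define J' where "J' xs = {j \<in> J. W j xs \<noteq> {#}}" for xs
  have Y_eq: "Y xs = (\<lambda>j. (j, W j xs)) ` J' xs" if "length xs = N" for xs
  proof
    show "Y xs \<subseteq> (\<lambda>j. (j, W j xs)) ` J' xs"
      unfolding Y_def I_def J'_def by auto
    show "(\<lambda>j. (j, W j xs)) ` J' xs \<subseteq> Y xs"
      using that unfolding Y_def I_def J'_def by auto
  qed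
  have "fibre_rep N (K * e) Y"
    unfolding Y_def
  proof (rule fibre_rep_true_events)
    show "finite I"
      using assms(1) by (simp add: I_def finite_list_length)
    show "cube_rep N e (\<lambda>xs. of_bool (W (fst i) xs = snd i))" if "i \<in> I" for i
      using assms(2) that unfolding I_def fibre_rep_def by auto
    fix xs :: "bool list"
    assume xs: "length xs = N"
    have "card (Y xs) \<le> card (J' xs)"
      using Y_eq[OF xs] by (simp add: card_image_le assms(1) J'_def)
    also have "\<dots> \<le> K"
      using card_nonempty_le_size_sum_mset[OF assms(1), of "\<lambda>j. W j xs"] assms(3)[OF xs]
      unfolding J'_def by linarith
    finally show "card {i \<in> I. W (fst i) xs = snd i} \<le> K"
      unfolding Y_def .
  qed
  then have "fibre_rep N (K * e) (\<lambda>xs. \<Sum>i\<in>Y xs. snd i)"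
    by (rule fibre_rep_map)
  then show ?thesis
  proof (rule fibre_rep_cong)
    fix xs :: "bool list"
    assume "length xs = N"
    then have "(\<Sum>i\<in>Y xs. snd i) = (\<Sum>j\<in>J' xs. W j xs)"
      by (simp add: Y_eq sum.reindex inj_on_def)
    also have "\<dots> = (\<Sum>j\<in>J. W j xs)"
      using assms(1) by (intro sum.mono_neutral_left) (auto simp: J'_def)
    finally show "(\<Sum>i\<in>Y xs. snd i) = (\<Sum>j\<in>J. W j xs)" .
  qed
qed

lemma qcost_ge_1: "1 \<le> qcost M"
  unfolding qcost_def by (simp add: Suc_le_eq nonempty_has_size)

lemma fibre_rep_exec:
  assumes "\<And>k. fibre_rep N d (\<lambda>xs. D xs k)"
  shows "fibre_rep N (b * d) (\<lambda>xs. exec n m (D xs) b h)"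
proof (induction n arbitrary: b h)
  case 0
  show ?case by (simp add: fibre_rep_const)
next
  case (Suc n)
  show ?case
  proof (cases "fst m h")
    case None
    then show ?thesis by (simp add: fibre_rep_const)
  next
    case (Some k)
    show ?thesis
    proof (cases b)
      case 0
      have "exec (Suc n) m (D xs) b h = None" for xs
        using Some 0 qcost_ge_1[of "D xs k"] by simp
      then show ?thesis using fibre_rep_const[of N "b * d" None] by simp
    next
      case (Suc b')
      define \<Phi> where "\<Phi> v xs =
        (if qcost v > b then None else exec n m (D xs) (b - qcost v) (h @ [(k, v)]))" for v xs
      have "fibre_rep N (b' * d) (\<Phi> v)" for v
      proof (cases "qcost v > b")
        case False
        have "(b - qcost v) * d \<le> b' * d"
          using qcost_ge_1[of v] Suc by (intro mult_le_mono1) simp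
        with Suc.IH have "fibre_rep N (b' * d) (\<lambda>xs. exec n m (D xs) (b - qcost v) (h @ [(k, v)]))"
          by (rule fibre_rep_mono)
        then show ?thesis
          unfolding \<Phi>_def using False by simp
      qed (simp add: \<Phi>_def[abs_def] fibre_rep_const)
      then have "fibre_rep N (d + b' * d) (\<lambda>xs. \<Phi> (D xs k) xs)"
        using assms by (rule fibre_rep_bind[rotated])
      moreover have "\<Phi> (D xs k) xs = exec (Suc n) m (D xs) b h" for xs
        using Some unfolding \<Phi>_def by simp
      ultimately show ?thesis using Suc by simp
    qed
  qed
qed

lemma fibre_rep_writes:
  assumes "\<And>k. fibre_rep N d (\<lambda>xs. D xs k)"
  shows "fibre_rep N (S * d) (\<lambda>xs. writes S m (D xs))"
  unfolding writes_def using fibre_rep_exec[OF assms] by (rule fibre_rep_map)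

lemma fibre_rep_round_step:
  assumes "\<And>k. fibre_rep N d (\<lambda>xs. D xs k)"
    and "\<And>xs k. length xs = N \<Longrightarrow> size (round_step S ms (D xs) k) \<le> S"
  shows "fibre_rep N (S * (S * d)) (\<lambda>xs. round_step S ms (D xs) k)"
proof -
  define W where "W j xs = mset (map snd (filter (\<lambda>p. fst p = k) (writes S (ms ! j) (D xs))))" for j xs
  have round_step_eq: "round_step S ms (D xs) k = (\<Sum>j<length ms. W j xs)" for xs
    unfolding round_step_def W_def by (simp add: sum_list_sum_nth atLeast0LessThan)
  have "fibre_rep N (S * (S * d)) (\<lambda>xs. \<Sum>j<length ms. W j xs)"
  proof (rule fibre_rep_sum_mset)
    show "fibre_rep N (S * d) (W j)" for j
      unfolding W_def using fibre_rep_writes[OF assms(1)] by (rule fibre_rep_map)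
    show "size (\<Sum>j<length ms. W j xs) \<le> S" if "length xs = N" for xs
      using assms(2)[OF that, of k] by (simp add: round_step_eq)
  qed simp
  then show ?thesis by (simp add: round_step_eq)
qed

lemma fibre_rep_dds0: "fibre_rep N 1 (\<lambda>xs. dds0 xs k)"
proof (cases "\<exists>i. k = Inp i \<and> 1 \<le> i \<and> i \<le> N")
  case True
  then obtain i where i: "k = Inp i" "1 \<le> i" "i \<le> N" by blast
  have "fibre_rep N 1 (\<lambda>xs. {# of_bool (xs ! (i - 1)) #} :: nat multiset)"
    using fibre_rep_bit[OF i(2,3)] by (rule fibre_rep_map)
  then show ?thesis by (rule fibre_rep_cong) (use i in \<open>auto simp: dds0_def\<close>)
next
  case False
  show ?thesis
    by (rule fibre_rep_cong[OF fibre_rep_const[of N 1 "{#}"]])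
      (use False in \<open>auto simp: dds0_def split: key.split\<close>)
qed

lemma fibre_rep_dds_at:
  assumes "valid_alg N S A" and "r \<le> length A"
  shows "fibre_rep N (S ^ (2 * r)) (\<lambda>xs. dds_at S A xs r k)"
  using assms(2)
proof (induction r arbitrary: k)
  case 0
  show ?case using fibre_rep_dds0[of N k] by simp
next
  case (Suc r)
  have "fibre_rep N (S * (S * S ^ (2 * r))) (\<lambda>xs. round_step S (A ! r) (dds_at S A xs r) k)"
  proof (rule fibre_rep_round_step)
    show "fibre_rep N (S ^ (2 * r)) (\<lambda>xs. dds_at S A xs r k')" for k'
      using Suc by simp
    show "size (round_step S (A ! r) (dds_at S A xs r) k') \<le> S" if "length xs = N" for xs k'
      using assms(1) Suc.prems that unfolding valid_alg_def by (metis Suc_le_lessD dds_at.simps(2))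
  qed
  then show ?case by (simp add: power_add mult_ac)
qed

lemma fibre_rep_answer:
  assumes "valid_alg N S A" and "length A \<le> R"
  shows "fibre_rep N (S ^ (2 * R)) (\<lambda>xs. dds_at S A xs (length A) Answer)"
proof (cases "length A = 0")
  case True
  (* Not covered by the general bound: for S = 0 and R > 0, S ^ (2 * R) = 0 < S ^ 0. *)
  show ?thesis
    by (rule fibre_rep_cong[OF fibre_rep_const[of N _ "{#}"]]) (simp add: True dds0_def)
next
  case False
  then have "S ^ (2 * length A) \<le> S ^ (2 * R)"
    using assms(2) by (cases "S = 0") (simp_all add: power_increasing power_0_left)
  with fibre_rep_dds_at[OF assms(1) order_refl] show ?thesis
    by (rule fibre_rep_mono)
qed

lemma cube_rep_prob:
  fixes P :: "'a pmf"
  assumes "\<And>A. A \<in> set_pmf P \<Longrightarrow> cube_rep N d (\<lambda>xs. of_bool (E A xs))"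
  shows "cube_rep N d (\<lambda>xs. measure_pmf.prob P {A. E A xs})"
proof -
  (* Grouping the algorithms by the set of inputs on which E holds makes the mixture a finite
     combination, even if P has infinite support. *)
  let ?C = "{xs :: bool list. length xs = N}"
  define F where "F A = {xs \<in> ?C. E A xs}" for A
  have "cube_rep N d (\<lambda>xs. \<Sum>T\<in>Pow ?C. measure_pmf.prob P {A. F A = T} * of_bool (xs \<in> T))"
  proof (rule cube_rep_sum)
    show "finite (Pow ?C)" by (simp add: finite_list_length)
    fix T
    show "cube_rep N d (\<lambda>xs. measure_pmf.prob P {A. F A = T} * of_bool (xs \<in> T))"
    proof (cases "measure_pmf.prob P {A. F A = T} = 0")
      case False
      then obtain A where A: "A \<in> set_pmf P" "F A = T"
        using measure_pmf_zero_iff by blast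
      have "cube_rep N d (\<lambda>xs. of_bool (xs \<in> T))"
        using assms[OF A(1)] by (rule cube_rep_cong) (use A(2) in \<open>auto simp: F_def\<close>)
      then show ?thesis by (rule cube_rep_scale)
    qed (simp add: cube_rep_const)
  qed
  then show ?thesis
  proof (rule cube_rep_cong)
    fix xs :: "bool list"
    assume xs: "length xs = N"
    let ?Ts = "{T \<in> Pow ?C. xs \<in> T}"
    have "{A. E A xs} = (\<Union>T\<in>?Ts. {A. F A = T})"
      using xs by (auto simp: F_def)
    then have "measure_pmf.prob P {A. E A xs} = measure_pmf.prob P (\<Union>T\<in>?Ts. {A. F A = T})"
      by simp
    also have "\<dots> = (\<Sum>T\<in>?Ts. measure_pmf.prob P {A. F A = T})"
      by (rule measure_pmf.finite_measure_finite_Union)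
        (auto simp: disjoint_family_on_def finite_list_length)
    also have "\<dots> = (\<Sum>T\<in>Pow ?C. if xs \<in> T then measure_pmf.prob P {A. F A = T} else 0)"
      by (rule sum.inter_filter) (simp add: finite_list_length)
    also have "\<dots> = (\<Sum>T\<in>Pow ?C. measure_pmf.prob P {A. F A = T} * of_bool (xs \<in> T))"
      by (rule sum.cong) auto
    finally show "(\<Sum>T\<in>Pow ?C. measure_pmf.prob P {A. F A = T} * of_bool (xs \<in> T))
        = measure_pmf.prob P {A. E A xs}" ..
  qed
qed

lemma prob_answer_one_approx:
  fixes P :: "algorithm pmf"
  assumes "measure_pmf.prob P {A. outputs S A xs b} \<ge> 2/3"
  shows "\<bar>measure_pmf.prob P {A. dds_at S A xs (length A) Answer = {#1#}} - of_bool b\<bar> \<le> 1/3"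
proof (cases b)
  case True
  then have "{A. outputs S A xs b} \<subseteq> {A. dds_at S A xs (length A) Answer = {#1#}}"
    by (auto simp: outputs_def)
  then have "measure_pmf.prob P {A. outputs S A xs b}
      \<le> measure_pmf.prob P {A. dds_at S A xs (length A) Answer = {#1#}}"
    by (rule measure_pmf.finite_measure_mono) simp
  then show ?thesis using assms True by simp
next
  case False
  then have "{A. dds_at S A xs (length A) Answer = {#1#}} \<subseteq> UNIV - {A. outputs S A xs b}"
    by (auto simp: outputs_def)
  then have "measure_pmf.prob P {A. dds_at S A xs (length A) Answer = {#1#}}
      \<le> measure_pmf.prob P (UNIV - {A. outputs S A xs b})"
    by (rule measure_pmf.finite_measure_mono) simp
  also have "\<dots> = 1 - measure_pmf.prob P {A. outputs S A xs b}"
    using measure_pmf.prob_compl[of "{A. outputs S A xs b}" P] by simp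
  finally show ?thesis using assms False by simp
qed

theorem theorem3p4:
  fixes N S R :: nat and g :: "bool list \<Rightarrow> bool" and P :: "algorithm pmf"
  assumes "rand_computes N S R (1/3) P g"
  shows "approx_deg N g \<le> S ^ (2 * R)"
proof -
  define q where "q xs = measure_pmf.prob P {A. dds_at S A xs (length A) Answer = {#1#}}" for xs
  have "cube_rep N (S ^ (2 * R)) q"
    unfolding q_def
  proof (rule cube_rep_prob)
    fix A
    assume "A \<in> set_pmf P"
    then have "valid_alg N S A" and "length A \<le> R"
      using assms by (auto simp: rand_computes_def)
    then show "cube_rep N (S ^ (2 * R)) (\<lambda>xs. of_bool (dds_at S A xs (length A) Answer = {#1#}))"
      using fibre_rep_answer unfolding fibre_rep_def by blast
  qed
  then obtain p where p: "poly_deg_le N (S ^ (2 * R)) p"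
    and p_q: "\<And>xs. length xs = N \<Longrightarrow> p (bitvec xs) = q xs"
    unfolding cube_rep_def by blast
  have "\<bar>p (bitvec xs) - of_bool (g xs)\<bar> \<le> 1/3" if "length xs = N" for xs
    using assms that prob_answer_one_approx[where P=P and xs=xs and b="g xs"]
    unfolding rand_computes_def p_q[OF that] q_def by simp
  with p show ?thesis
    unfolding approx_deg_def by (intro Least_le) blast
qed

end
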